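(* A set $S\subseteq\mathbb Z$ is $a$-nice for some $a\in\mathbb Z$ if and only if the following three conditions hold: (1) if $b\in S$ then $b-n\in S$; (2) $|S\cap\mathbb Z_{>0}|<\infty$; (3) $|\mathbb Z_{<0}\setminus S|<\infty$.
   Context: $\hat S_n$ is the affine symmetric group with generators $s_0,\dots,s_{n-1}$ (indices mod $n$). It acts on $\mathbb Z$ by $s_i(a)=a+1$ if $a\equiv i\pmod n$, $s_i(a)=a-1$ if $a\equiv i+1\pmod n$, and $s_i(a)=a$ otherwise; this induces an action on subsets of $\mathbb Z$. Let $\mathbb Z_{\le a}=\{b\in\mathbb Z: b\le a\}$. A subset $S\subseteq\mathbb Z$ is $a$-nice if $S=w(\mathbb Z_{\le a})$ for some $w\in\hat S_n$. *)

theory Defs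
  imports Main
begin

definition affgen :: "nat \<Rightarrow> int \<Rightarrow> int \<Rightarrow> int" where
  "affgen n i a =
     (if a mod int n = i mod int n then a + 1
      else if a mod int n = (i + 1) mod int n then a - 1
      else a)"

text \<open>Elements of the affine symmetric group: finite products of generators
  s_0, ..., s_(n-1), realised as their action on the integers.\<close>
definition affperm :: "nat \<Rightarrow> (int \<Rightarrow> int) set" where
  "affperm n = {foldr (\<lambda>i f. affgen n i \<circ> f) is id | is.
                  set is \<subseteq> {0..<int n}}"

definition nice :: "nat \<Rightarrow> int \<Rightarrow> int set \<Rightarrow> bool" where
  "nice n a S \<longleftrightarrow> (\<exists>w \<in> affperm n. S = w ` {..a})"

end

theory Submission imports Defs begin

text \<open>Every element w of the affine symmetric group commutes with translation by n, is
  surjective (a product of involutions) and moves each integer by at most the length of a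
  word for w; these three facts give the three conditions for w(Z_{<=a}).

  Conversely, a set S satisfying the conditions is an abacus with n runners: it is
  determined by the largest element v r of S in each residue class r mod n. If x + 1 lies in S
  but x does not, then the generator s_(x mod n) maps S onto the abacus obtained by exchanging
  the tops of the runners x mod n and x + 1 mod n (each shifted by one), and this strictly
  decreases the sum of the squares of the v r. If there is no such x, then S is an interval
  Z_{<=a}. Induction on the sum of squares therefore writes S as w(Z_{<=a}).\<close>

lemma succ_mod_neq:
  assumes "n \<ge> 2"
  shows "(i + 1) mod int n \<noteq> i mod int n"
proof
  assume "(i + 1) mod int n = i mod int n"
  then have "int n dvd 1" by (simp add: mod_eq_dvd_iff)
  then show False using assms by simp
qed

lemma affgen_affgen:
  assumes "n \<ge> 2"
  shows "affgen n i (affgen n i a) = a"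
proof -
  have ne: "(i + 1) mod int n \<noteq> i mod int n" using succ_mod_neq[OF assms] .
  consider (up) "a mod int n = i mod int n"
    | (down) "a mod int n \<noteq> i mod int n" "a mod int n = (i + 1) mod int n"
    | (fixed) "a mod int n \<noteq> i mod int n" "a mod int n \<noteq> (i + 1) mod int n"
    by blast
  then show ?thesis
  proof cases
    case up
    then have "(a + 1) mod int n = (i + 1) mod int n" by (simp add: mod_eq_dvd_iff)
    with up ne show ?thesis by (simp add: affgen_def)
  next
    case down
    then have "(a - 1) mod int n = i mod int n"
      by (simp add: mod_eq_dvd_iff algebra_simps)
    with down ne show ?thesis by (simp add: affgen_def)
  next
    case fixed
    then show ?thesis by (simp add: affgen_def)
  qed
qed

lemma affgen_add_period: "affgen n i (b + int n) = affgen n i b + int n"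
  by (simp add: affgen_def)

lemma abs_affgen_diff_le: "\<bar>affgen n i b - b\<bar> \<le> 1"
  by (simp add: affgen_def)

definition affword :: "nat \<Rightarrow> int list \<Rightarrow> int \<Rightarrow> int" where
  "affword n is = foldr (\<lambda>i f. affgen n i \<circ> f) is id"

lemma affword_Nil [simp]: "affword n [] = id"
  by (simp add: affword_def)

lemma affword_Cons [simp]: "affword n (i # is) = affgen n i \<circ> affword n is"
  by (simp add: affword_def)

lemma affperm_iff: "w \<in> affperm n \<longleftrightarrow> (\<exists>is. set is \<subseteq> {0..<int n} \<and> w = affword n is)"
  by (auto simp: affperm_def affword_def)

lemma id_in_affperm: "id \<in> affperm n"
  unfolding affperm_iff by (rule exI[of _ "[]"]) simp

lemma affgen_comp_in_affperm:
  assumes "w \<in> affperm n" and "j \<in> {0..<int n}"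
  shows "affgen n j \<circ> w \<in> affperm n"
proof -
  obtain "is" where "set is \<subseteq> {0..<int n}" and "w = affword n is"
    using assms(1) by (auto simp: affperm_iff)
  then show ?thesis
    using assms(2) unfolding affperm_iff by (intro exI[of _ "j # is"]) simp
qed

lemma affword_add_period: "affword n is (b + int n) = affword n is b + int n"
  by (induction "is" arbitrary: b) (simp_all add: affgen_add_period)

lemma surj_affword:
  assumes "n \<ge> 2"
  shows "surj (affword n is)"
proof (induction "is")
  case (Cons i "is")
  have "surj (affgen n i)" by (metis affgen_affgen[OF assms] surjI)
  from comp_surj[OF Cons.IH this] show ?case by simp
qed simp

lemma abs_affword_diff_le: "\<bar>affword n is b - b\<bar> \<le> int (length is)"
proof (induction "is")
  case (Cons i "is")
  have "\<bar>affgen n i (affword n is b) - affword n is b\<bar> \<le> 1"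
    by (rule abs_affgen_diff_le)
  with Cons.IH show ?case by simp
qed simp

lemma affperm_add_period: "w \<in> affperm n \<Longrightarrow> w (b + int n) = w b + int n"
  by (auto simp: affperm_iff affword_add_period)

lemma affperm_surj: "n \<ge> 2 \<Longrightarrow> w \<in> affperm n \<Longrightarrow> surj w"
  by (auto simp: affperm_iff surj_affword)

lemma affperm_bounded_displacement: "w \<in> affperm n \<Longrightarrow> \<exists>L. \<forall>b. \<bar>w b - b\<bar> \<le> L"
  by (auto simp: affperm_iff intro: abs_affword_diff_le)

lemma periodic_image_atMost_conditions:
  fixes w :: "int \<Rightarrow> int" and a :: int
  assumes "p \<ge> 0" and period: "\<And>b. w (b + p) = w b + p" and "surj w" and displ: "\<And>b. \<bar>w b - b\<bar> \<le> L"
  defines "S \<equiv> w ` {..a}"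
  shows "(\<forall>b\<in>S. b - p \<in> S) \<and> finite (S \<inter> {0<..}) \<and> finite ({..<0} - S)"
proof (intro conjI)
  show "\<forall>b\<in>S. b - p \<in> S"
  proof
    fix b assume "b \<in> S"
    then obtain c where "c \<le> a" and "b = w c" by (auto simp: S_def)
    moreover have "w (c - p) = w c - p" using period[of "c - p"] by simp
    ultimately show "b - p \<in> S" using \<open>p \<ge> 0\<close> by (auto simp: S_def intro!: image_eqI[where x = "c - p"])
  qed
  have "S \<inter> {0<..} \<subseteq> {0<..a + L}"
  proof
    fix b assume "b \<in> S \<inter> {0<..}"
    then obtain c where "c \<le> a" "b = w c" "0 < b" by (auto simp: S_def)
    with displ[of c] show "b \<in> {0<..a + L}" by auto
  qed
  then show "finite (S \<inter> {0<..})" by (rule finite_subset) simp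
  have "{..<0} - S \<subseteq> {a - L..<0}"
  proof
    fix b assume b: "b \<in> {..<0} - S"
    obtain c where c: "b = w c" using \<open>surj w\<close> by (metis surjD)
    with b have "a < c" by (auto simp: S_def)
    with b c displ[of c] show "b \<in> {a - L..<0}" by auto
  qed
  then show "finite ({..<0} - S)" by (rule finite_subset) simp
qed

text \<open>Runner r of the abacus is the residue class of r mod n, filled up to its top bead v r.
  The hypothesis v r mod n = r used below says that v r does lie on runner r.\<close>

definition abacus :: "nat \<Rightarrow> (int \<Rightarrow> int) \<Rightarrow> int set" where
  "abacus n v = {x. x \<le> v (x mod int n)}"

lemma image_involution_iff:
  assumes "\<And>a. f (f a) = a"
  shows "y \<in> f ` A \<longleftrightarrow> f y \<in> A"
  using assms by (metis imageE imageI)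

lemma affgen_image_abacus:
  assumes n: "n \<ge> 2" and j: "j \<in> {0..<int n}" and j': "j' = (j + 1) mod int n"
  shows "affgen n j ` abacus n v = abacus n (v(j' := v j + 1, j := v j' - 1))"
proof (rule set_eqI)
  fix y
  have ne: "j' \<noteq> j" using succ_mod_neq[OF n, of j] j j' by simp
  have jm: "j mod int n = j" using j by simp
  have "y \<in> affgen n j ` abacus n v \<longleftrightarrow> affgen n j y \<in> abacus n v"
    by (rule image_involution_iff, rule affgen_affgen[OF n])
  also have "\<dots> \<longleftrightarrow> y \<in> abacus n (v(j' := v j + 1, j := v j' - 1))"
  proof -
    consider (at_j) "y mod int n = j" | (at_succ) "y mod int n = j'"
      | (other) "y mod int n \<noteq> j" "y mod int n \<noteq> j'"
      by blast
    then show ?thesis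
    proof cases
      case at_j
      have "(y + 1) mod int n = (y mod int n + 1) mod int n" by (simp add: mod_add_left_eq)
      with at_j j' have "(y + 1) mod int n = j'" by simp
      with at_j jm show ?thesis by (simp add: affgen_def abacus_def) linarith
    next
      case at_succ
      have "(y - 1) mod int n = (y mod int n - 1) mod int n" by (simp add: mod_diff_left_eq)
      also have "\<dots> = ((j + 1) mod int n - 1) mod int n" using at_succ j' by simp
      also have "\<dots> = j" using jm by (simp add: mod_diff_left_eq)
      finally have "(y - 1) mod int n = j" .
      with at_succ jm ne j' show ?thesis by (simp add: affgen_def abacus_def) linarith
    next
      case other
      then show ?thesis using jm j' by (simp add: affgen_def abacus_def)
    qed
  qed
  finally show "y \<in> affgen n j ` abacus n v \<longleftrightarrow> y \<in> abacus n (v(j' := v j + 1, j := v j' - 1))" .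
qed

lemma swap_tops_normalised:
  assumes "n > 0" and norm: "\<forall>r\<in>{0..<int n}. v r mod int n = r"
    and j: "j \<in> {0..<int n}" and j': "j' = (j + 1) mod int n"
  shows "\<forall>r\<in>{0..<int n}. (v(j' := v j + 1, j := v j' - 1)) r mod int n = r"
proof -
  have "j' \<in> {0..<int n}" using \<open>n > 0\<close> j' by simp
  have "(v j' - 1) mod int n = (v j' mod int n - 1) mod int n"
    by (simp add: mod_diff_left_eq)
  also have "\<dots> = ((j + 1) mod int n - 1) mod int n" using norm j' \<open>j' \<in> {0..<int n}\<close> by simp
  also have "\<dots> = j" using j by (simp add: mod_diff_left_eq)
  finally have "(v j' - 1) mod int n = j" .
  moreover have "(v j + 1) mod int n = (v j mod int n + 1) mod int n"
    by (simp add: mod_add_left_eq)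
  then have "(v j + 1) mod int n = j'" using norm j j' by simp
  ultimately show ?thesis using norm by auto
qed

lemma sum_squares_swap:
  fixes v :: "'a \<Rightarrow> int"
  assumes "finite I" and "j \<in> I" and "j' \<in> I" and "j' \<noteq> j"
  shows "(\<Sum>r\<in>I. ((v(j' := v j + 1, j := v j' - 1)) r)\<^sup>2)
           = (\<Sum>r\<in>I. (v r)\<^sup>2) + 2 * (v j - v j') + 2"
proof -
  have "(\<Sum>r\<in>I. ((v(j' := v j + 1, j := v j' - 1)) r)\<^sup>2)
          = (\<Sum>r\<in>I. (v r)\<^sup>2) - (v j)\<^sup>2 - (v j')\<^sup>2 + (v j' - 1)\<^sup>2 + (v j + 1)\<^sup>2"
    using assms by (simp add: sum.remove[of I j] sum.remove[of "I - {j}" j'] algebra_simps)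
  then show ?thesis by (simp add: power2_eq_square algebra_simps)
qed

text \<open>Since x is empty while lying on the same runner as v (x mod n), that top bead is at most
  x - n.\<close>

lemma abacus_gap:
  assumes norm: "\<forall>r\<in>{0..<int n}. v r mod int n = r" and "n > 0"
    and "x + 1 \<in> abacus n v" and "x \<notin> abacus n v"
  shows "v (x mod int n) + int n + 1 \<le> v ((x mod int n + 1) mod int n)"
proof -
  have "v (x mod int n) < x" using assms(4) by (simp add: abacus_def)
  moreover have "x mod int n = v (x mod int n) mod int n" using norm \<open>n > 0\<close> by simp
  then have "int n dvd x - v (x mod int n)" by (simp add: mod_eq_dvd_iff)
  ultimately have "int n \<le> x - v (x mod int n)" by (simp add: zdvd_imp_le)
  moreover have "x + 1 \<le> v ((x mod int n + 1) mod int n)"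
    using assms(3) by (simp add: abacus_def mod_add_left_eq)
  ultimately show ?thesis by simp
qed

lemma down_closed_eq_atMost:
  fixes A :: "int set"
  assumes down: "\<And>x. x + 1 \<in> A \<Longrightarrow> x \<in> A" and "a \<in> A" and "\<And>x. x \<in> A \<Longrightarrow> x \<le> a"
  shows "A = {..a}"
proof
  show "{..a} \<subseteq> A"
  proof
    fix y assume "y \<in> {..a}"
    then have "y \<le> a" by simp
    then show "y \<in> A"
      by (induction y rule: int_le_induct) (use \<open>a \<in> A\<close> down in auto)
  qed
qed (use assms(3) in auto)

lemma down_closed_abacus_eq_atMost:
  assumes norm: "\<forall>r\<in>{0..<int n}. v r mod int n = r" and "n > 0"
    and down: "\<And>x. x + 1 \<in> abacus n v \<Longrightarrow> x \<in> abacus n v"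
  shows "\<exists>a. abacus n v = {..a}"
proof
  let ?a = "Max (v ` {0..<int n})"
  have fin: "finite (v ` {0..<int n})" "v ` {0..<int n} \<noteq> {}" using \<open>n > 0\<close> by auto
  obtain r where "r \<in> {0..<int n}" and "?a = v r" using Max_in[OF fin] by auto
  then have "?a \<in> abacus n v" using norm by (simp add: abacus_def)
  moreover have "x \<le> ?a" if "x \<in> abacus n v" for x
  proof -
    have "x mod int n \<in> {0..<int n}" using \<open>n > 0\<close> by simp
    then have "v (x mod int n) \<le> ?a" using fin by simp
    with that show ?thesis by (simp add: abacus_def)
  qed
  ultimately show "abacus n v = {..?a}" using down_closed_eq_atMost[OF down] by blast
qed

lemma abacus_in_affperm_image:
  assumes n: "n \<ge> 2" and norm: "\<forall>r\<in>{0..<int n}. v r mod int n = r"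
  shows "\<exists>a. \<exists>w\<in>affperm n. abacus n v = w ` {..a}"
  using norm
proof (induction "nat (\<Sum>r\<in>{0..<int n}. (v r)\<^sup>2)" arbitrary: v rule: less_induct)
  case less
  show ?case
  proof (cases "\<forall>x. x + 1 \<in> abacus n v \<longrightarrow> x \<in> abacus n v")
    case True
    then obtain a where "abacus n v = id ` {..a}"
      using down_closed_abacus_eq_atMost[OF less.prems] n by auto
    then show ?thesis using id_in_affperm by blast
  next
    case False
    then obtain x where x: "x + 1 \<in> abacus n v" "x \<notin> abacus n v" by blast
    define j where "j = x mod int n"
    define j' where "j' = (j + 1) mod int n"
    define v' where "v' = v(j' := v j + 1, j := v j' - 1)"
    have j: "j \<in> {0..<int n}" and "j' \<in> {0..<int n}" using n by (simp_all add: j_def j'_def)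
    moreover have "j' \<noteq> j" using succ_mod_neq[OF n, of j] j by (simp add: j'_def)
    ultimately have "(\<Sum>r\<in>{0..<int n}. (v' r)\<^sup>2) = (\<Sum>r\<in>{0..<int n}. (v r)\<^sup>2) + 2 * (v j - v j') + 2"
      unfolding v'_def by (intro sum_squares_swap) auto
    moreover have "v j + int n + 1 \<le> v j'"
      using abacus_gap[OF less.prems _ x] n by (simp add: j_def j'_def)
    ultimately have "nat (\<Sum>r\<in>{0..<int n}. (v' r)\<^sup>2) < nat (\<Sum>r\<in>{0..<int n}. (v r)\<^sup>2)"
      using n sum_nonneg[of "{0..<int n}" "\<lambda>r. (v' r)\<^sup>2"] by simp
    moreover have "\<forall>r\<in>{0..<int n}. v' r mod int n = r"
      unfolding v'_def by (rule swap_tops_normalised[OF _ less.prems j j'_def]) (use n in simp)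
    ultimately obtain a w where w: "w \<in> affperm n" "abacus n v' = w ` {..a}"
      using less.hyps by blast
    have "abacus n v = affgen n j ` abacus n v'"
      unfolding v'_def affgen_image_abacus[OF n j j'_def, symmetric] image_image
        affgen_affgen[OF n] by simp
    then have "abacus n v = (affgen n j \<circ> w) ` {..a}" using w(2) by (simp add: image_comp)
    then show ?thesis using affgen_comp_in_affperm[OF w(1) j] by blast
  qed
qed

lemma int_Sup_in:
  fixes X :: "int set"
  assumes "x \<in> X" and "bdd_above X"
  shows "Sup X \<in> X"
proof -
  obtain b where b: "\<And>y. y \<in> X \<Longrightarrow> y \<le> b" using assms(2) by (auto simp: bdd_above_def)
  have fin: "finite (X \<inter> {x..})" by (rule finite_subset[of _ "{x..b}"]) (auto dest: b)
  have "Max (X \<inter> {x..}) \<in> X \<inter> {x..}" using fin assms(1) by (intro Max_in) auto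
  moreover have "y \<le> Max (X \<inter> {x..})" if "y \<in> X" for y
  proof (cases "x \<le> y")
    case False
    then have "y \<le> x" by simp
    also have "x \<le> Max (X \<inter> {x..})" using fin assms(1) by (intro Max_ge) auto
    finally show ?thesis .
  qed (use fin that in \<open>auto intro: Max_ge\<close>)
  ultimately have "Sup X = Max (X \<inter> {x..})" by (intro cSup_eq_maximum) auto
  with \<open>Max (X \<inter> {x..}) \<in> X \<inter> {x..}\<close> show ?thesis by simp
qed

lemma diff_mult_in_closed:
  assumes "\<forall>b\<in>S. b - p \<in> S" and "y \<in> S"
  shows "y - p * int k \<in> S"
proof (induction k)
  case (Suc k)
  then have "(y - p * int k) - p \<in> S" using assms(1) by blast
  then show ?case by (simp add: algebra_simps)
qed (use assms(2) in simp)

lemma conditions_imp_abacus: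
  assumes "n > 0" and closed: "\<forall>b\<in>S. b - int n \<in> S"
    and "finite (S \<inter> {0<..})" and "finite ({..<0} - S)"
  shows "\<exists>v. (\<forall>r\<in>{0..<int n}. v r mod int n = r) \<and> S = abacus n v"
proof -
  let ?runner = "\<lambda>r. {x \<in> S. x mod int n = r}"
  define v where "v r = Sup (?runner r)" for r
  have "bdd_above ({..0} \<union> (S \<inter> {0<..}))" using bdd_above_finite[OF assms(3)] by simp
  moreover have "S \<subseteq> {..0} \<union> (S \<inter> {0<..})" by auto
  ultimately have bdd: "bdd_above S" by (rule bdd_above_mono)
  obtain m where m: "\<And>x. x \<in> {..<0} - S \<Longrightarrow> m \<le> x"
    using bdd_below_finite[OF assms(4)] by (auto simp: bdd_below_def)
  have runner_nonempty: "r - int n * (\<bar>m\<bar> + 1) \<in> ?runner r" if "r \<in> {0..<int n}" for r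
  proof -
    have "int n * \<bar>m\<bar> \<ge> \<bar>m\<bar>" using mult_right_mono[of 1 "int n" "\<bar>m\<bar>"] \<open>n > 0\<close> by simp
    then have "r - int n * (\<bar>m\<bar> + 1) < min 0 m" using that by (auto simp: distrib_left)
    then have "r - int n * (\<bar>m\<bar> + 1) \<in> S" using m by force
    moreover have "(r + (- (\<bar>m\<bar> + 1)) * int n) mod int n = r" using that by simp
    ultimately show ?thesis by (simp add: algebra_simps)
  qed
  have top: "v r \<in> ?runner r" if "r \<in> {0..<int n}" for r
    unfolding v_def using runner_nonempty[OF that] bdd_above_mono[OF bdd]
    by (intro int_Sup_in) auto
  have "S = abacus n v"
  proof (intro set_eqI iffI)
    fix x assume "x \<in> S"
    then show "x \<in> abacus n v"
      using bdd_above_mono[OF bdd] by (auto simp: abacus_def v_def intro: cSup_upper)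
  next
    fix x assume "x \<in> abacus n v"
    then have le: "x \<le> v (x mod int n)" by (simp add: abacus_def)
    have "x mod int n \<in> {0..<int n}" using \<open>n > 0\<close> by simp
    then have v: "v (x mod int n) \<in> S" "v (x mod int n) mod int n = x mod int n" using top by auto
    then obtain q where q: "v (x mod int n) - x = int n * q" by (metis mod_eq_dvd_iff dvdE)
    with le have "0 \<le> int n * q" by simp
    with \<open>n > 0\<close> have "q \<ge> 0" by (simp add: zero_le_mult_iff)
    with q have "x = v (x mod int n) - int n * int (nat q)" by simp
    with diff_mult_in_closed[OF closed v(1)] show "x \<in> S" by metis
  qed
  with top show ?thesis by blast
qed

theorem lemma5p1:
  fixes n :: nat and S :: "int set"
  assumes "n \<ge> 2"
  shows "(\<exists>a. nice n a S) \<longleftrightarrow>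
           ((\<forall>b\<in>S. b - int n \<in> S) \<and> finite (S \<inter> {0<..}) \<and> finite ({..<0} - S))"
proof
  assume "\<exists>a. nice n a S"
  then obtain a w where w: "w \<in> affperm n" and S: "S = w ` {..a}" unfolding nice_def by blast
  obtain L where "\<forall>b. \<bar>w b - b\<bar> \<le> L" using affperm_bounded_displacement[OF w] by blast
  then show "(\<forall>b\<in>S. b - int n \<in> S) \<and> finite (S \<inter> {0<..}) \<and> finite ({..<0} - S)"
    unfolding S using affperm_add_period[OF w] affperm_surj[OF assms w]
    by (intro periodic_image_atMost_conditions) auto
next
  assume "(\<forall>b\<in>S. b - int n \<in> S) \<and> finite (S \<inter> {0<..}) \<and> finite ({..<0} - S)"
  moreover have "n > 0" using assms by simp
  ultimately obtain v where "\<forall>r\<in>{0..<int n}. v r mod int n = r" and "S = abacus n v"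
    using conditions_imp_abacus by blast
  then show "\<exists>a. nice n a S"
    using abacus_in_affperm_image[OF assms] unfolding nice_def by blast
qed

end
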